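(* Let $M$ be a minimal dominating set of a finite tree $T$. Then $$|N_1(M)|-\rho_1(M)+|N_2(M)|-\rho_2(M)\le 2(\Gamma(T)-|M|).$$
   Context: A dominating set of a graph $G=(V,E)$ is a set $S\subseteq V$ such that every vertex is in $S$ or adjacent to a vertex of $S$; it is minimal if no proper subset is dominating. $\Gamma(T)$ is the maximum size of a minimal dominating set of $T$. $N[u]=N(u)\cup\{u\}$. For a dominating set $S$: $a(S)=\{u\in S: S\setminus\{u\}\text{ is not dominating}\}$; $N_1(S)=\{u\in V\setminus S: |N[u]\cap S|=1\}$; $N_2(S)=\{u\in V\setminus S: |N[u]\cap S|\ge 2\}$; $a_1(S)=\{u\in a(S): N[u]\cap N_1(S)\ne\emptyset\}$; $a_2(S)=\{u\in a(S): N[u]\cap N_1(S)=\emptyset\}$. $\rho_1(M)$ is the maximum size of a matching, using edges of $T$, between $N_1(M)$ and $a_1(M)$ (each edge joining a vertex of $N_1(M)$ to a vertex of $a_1(M)$); $\rho_2(M)$ is the maximum size of such a matching between $N_2(M)$ and $a_2(M)$. *)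

theory Defs
  imports Main
begin

definition simple_graph :: "'a set \<Rightarrow> 'a set set \<Rightarrow> bool" where
  "simple_graph V E \<longleftrightarrow> (\<forall>e\<in>E. e \<subseteq> V \<and> card e = 2)"

definition adj :: "'a set set \<Rightarrow> 'a \<Rightarrow> 'a \<Rightarrow> bool" where
  "adj E u v \<longleftrightarrow> {u, v} \<in> E"

fun walk :: "'a set \<Rightarrow> 'a set set \<Rightarrow> 'a list \<Rightarrow> bool" where
  "walk V E [] = False"
| "walk V E [v] = (v \<in> V)"
| "walk V E (u # v # vs) = (u \<in> V \<and> adj E u v \<and> walk V E (v # vs))"

definition connected_graph :: "'a set \<Rightarrow> 'a set set \<Rightarrow> bool" where
  "connected_graph V E \<longleftrightarrow>
     (\<forall>u\<in>V. \<forall>v\<in>V. \<exists>p. walk V E p \<and> hd p = u \<and> last p = v)"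

definition is_cycle :: "'a set \<Rightarrow> 'a set set \<Rightarrow> 'a list \<Rightarrow> bool" where
  "is_cycle V E c \<longleftrightarrow> length c \<ge> 3 \<and> distinct c \<and> walk V E c \<and> adj E (last c) (hd c)"

definition acyclic_graph :: "'a set \<Rightarrow> 'a set set \<Rightarrow> bool" where
  "acyclic_graph V E \<longleftrightarrow> (\<nexists>c. is_cycle V E c)"

definition finite_tree :: "'a set \<Rightarrow> 'a set set \<Rightarrow> bool" where
  "finite_tree V E \<longleftrightarrow> finite V \<and> V \<noteq> {} \<and> simple_graph V E
     \<and> connected_graph V E \<and> acyclic_graph V E"

definition cnbhd :: "'a set \<Rightarrow> 'a set set \<Rightarrow> 'a \<Rightarrow> 'a set" where
  "cnbhd V E u = insert u {v\<in>V. adj E u v}"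

definition dominating :: "'a set \<Rightarrow> 'a set set \<Rightarrow> 'a set \<Rightarrow> bool" where
  "dominating V E S \<longleftrightarrow> S \<subseteq> V \<and> (\<forall>v\<in>V. v \<in> S \<or> (\<exists>u\<in>S. adj E u v))"

definition minimal_dominating :: "'a set \<Rightarrow> 'a set set \<Rightarrow> 'a set \<Rightarrow> bool" where
  "minimal_dominating V E S \<longleftrightarrow> dominating V E S \<and> (\<forall>S'. S' \<subset> S \<longrightarrow> \<not> dominating V E S')"

definition upper_domination :: "'a set \<Rightarrow> 'a set set \<Rightarrow> nat" where
  "upper_domination V E = Max (card ` {S. minimal_dominating V E S})"

definition aS :: "'a set \<Rightarrow> 'a set set \<Rightarrow> 'a set \<Rightarrow> 'a set" where
  "aS V E S = {u\<in>S. \<not> dominating V E (S - {u})}"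

definition N1 :: "'a set \<Rightarrow> 'a set set \<Rightarrow> 'a set \<Rightarrow> 'a set" where
  "N1 V E S = {u\<in>V - S. card (cnbhd V E u \<inter> S) = 1}"

definition N2 :: "'a set \<Rightarrow> 'a set set \<Rightarrow> 'a set \<Rightarrow> 'a set" where
  "N2 V E S = {u\<in>V - S. card (cnbhd V E u \<inter> S) \<ge> 2}"

definition a1 :: "'a set \<Rightarrow> 'a set set \<Rightarrow> 'a set \<Rightarrow> 'a set" where
  "a1 V E S = {u\<in>aS V E S. cnbhd V E u \<inter> N1 V E S \<noteq> {}}"

definition a2 :: "'a set \<Rightarrow> 'a set set \<Rightarrow> 'a set \<Rightarrow> 'a set" where
  "a2 V E S = {u\<in>aS V E S. cnbhd V E u \<inter> N1 V E S = {}}"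

definition matching_between :: "'a set set \<Rightarrow> 'a set \<Rightarrow> 'a set \<Rightarrow> 'a set set \<Rightarrow> bool" where
  "matching_between E A B F \<longleftrightarrow> F \<subseteq> E
     \<and> (\<forall>e\<in>F. \<exists>x\<in>A. \<exists>y\<in>B. e = {x, y})
     \<and> (\<forall>e\<in>F. \<forall>e'\<in>F. e \<noteq> e' \<longrightarrow> e \<inter> e' = {})"

definition max_matching :: "'a set set \<Rightarrow> 'a set \<Rightarrow> 'a set \<Rightarrow> nat" where
  "max_matching E A B = Max (card ` {F. matching_between E A B F})"

definition rho1 :: "'a set \<Rightarrow> 'a set set \<Rightarrow> 'a set \<Rightarrow> nat" where
  "rho1 V E M = max_matching E (N1 V E M) (a1 V E M)"

definition rho2 :: "'a set \<Rightarrow> 'a set set \<Rightarrow> 'a set \<Rightarrow> nat" where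
  "rho2 V E M = max_matching E (N2 V E M) (a2 V E M)"

end

theory Submission
  imports Defs
begin

(*
  By minimality, every vertex of M is either isolated within M or has a private neighbour, which
  lies in N1. The vertices of the second kind form a1, and their private neighbours match a1 into
  N1, so |a1| <= rho1. The vertices of a2 are independent and all their neighbours lie in N2.
  In a forest, repeatedly deleting a leaf together with its neighbour gives an independent set I
  and a matching F between V and a2 with |V| + |a2| <= 2|I| + |F|. Here F matches a2 into N2, so
  |F| <= rho2, and I extends to a maximal independent set, which is a minimal dominating set, so
  |I| <= Gamma. The claim follows from |V| = |M| + |N1| + |N2| and |M| = |a1| + |a2|.
*)

lemma adj_commute: "adj E u v \<longleftrightarrow> adj E v u"
  unfolding adj_def by (simp add: insert_commute)

lemma simple_graph_not_adj_self: "simple_graph V E \<Longrightarrow> \<not> adj E u u"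
  unfolding adj_def simple_graph_def by fastforce

lemma simple_graph_adj_in_vertices: "simple_graph V E \<Longrightarrow> adj E u v \<Longrightarrow> u \<in> V \<and> v \<in> V"
  unfolding adj_def simple_graph_def by blast

lemma simple_graph_finite_edges: "simple_graph V E \<Longrightarrow> finite V \<Longrightarrow> finite E"
  unfolding simple_graph_def by (meson PowI finite_Pow_iff finite_subset subsetI)

lemma walk_mono: "walk W E p \<Longrightarrow> W \<subseteq> V \<Longrightarrow> walk V E p"
  by (induction W E p rule: walk.induct) auto

lemma walk_take: "walk V E p \<Longrightarrow> 0 < n \<Longrightarrow> walk V E (take n p)"
proof (induction V E p arbitrary: n rule: walk.induct)
  case (3 V E u v vs)
  then obtain m where n: "n = Suc m" using gr0_conv_Suc by blast
  show ?case
  proof (cases m)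
    case (Suc k)
    then have "walk V E (v # take k vs)" using "3.IH"[of m] "3.prems" by simp
    then show ?thesis using "3.prems" n Suc by simp
  qed (use "3.prems" n in simp)
qed auto

lemma walk_Cons_hd: "walk V E p \<Longrightarrow> walk V E (w # p) \<longleftrightarrow> w \<in> V \<and> adj E w (hd p)"
  by (cases p) auto

lemma walk_set_subset: "walk V E p \<Longrightarrow> set p \<subseteq> V"
  by (induction V E p rule: walk.induct) auto

lemma walk_nonempty: "walk V E p \<Longrightarrow> p \<noteq> []"
  by auto

lemma walk_prefix_cycle:
  assumes "walk V E p" "distinct p" "2 \<le> i" "i < length p" "adj E (p ! i) (hd p)"
  shows "is_cycle V E (take (Suc i) p)"
  unfolding is_cycle_def
proof (intro conjI)
  show "walk V E (take (Suc i) p)" using assms(1) by (rule walk_take) simp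
  have "last (take (Suc i) p) = p ! i" using assms(4) by (simp add: take_Suc_conv_app_nth)
  moreover have "hd (take (Suc i) p) = hd p" by simp
  ultimately show "adj E (last (take (Suc i) p)) (hd (take (Suc i) p))" using assms(5) by simp
qed (use assms in auto)

lemma acyclic_walk_extend:
  assumes sg: "simple_graph V E" and ac: "acyclic_graph V E" and WV: "W \<subseteq> V"
    and p: "walk W E p" "distinct p"
    and ab: "a \<in> W" "b \<in> W" "a \<noteq> b" "adj E (hd p) a" "adj E (hd p) b"
  shows "\<exists>w. walk W E (w # p) \<and> distinct (w # p)"
proof -
  (* One of a, b differs from the successor of hd p on p; if it lay on p, it would close a cycle. *)
  obtain w where w: "w \<in> W" "adj E (hd p) w" "1 < length p \<Longrightarrow> w \<noteq> p ! 1"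
    using ab by metis
  have "w \<notin> set p"
  proof
    assume "w \<in> set p"
    then obtain i where i: "i < length p" "p ! i = w" by (auto simp: in_set_conv_nth)
    have "p ! 0 = hd p" using walk_nonempty[OF p(1)] by (simp add: hd_conv_nth)
    then have "i \<noteq> 0" using i(2) w(2) simple_graph_not_adj_self[OF sg] by metis
    moreover have "i \<noteq> 1" using i w(3) by auto
    moreover have "adj E (p ! i) (hd p)" using i(2) w(2) adj_commute by metis
    ultimately have "is_cycle V E (take (Suc i) p)"
      using walk_mono[OF p(1) WV] p(2) i(1) by (intro walk_prefix_cycle) auto
    then show False using ac unfolding acyclic_graph_def by blast
  qed
  moreover have "walk W E (w # p)" using p(1) w(1,2) adj_commute walk_Cons_hd by metis
  ultimately show ?thesis using p(2) by auto
qed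

lemma acyclic_subset_has_leaf:
  assumes sg: "simple_graph V E" and ac: "acyclic_graph V E"
    and W: "finite W" "W \<subseteq> V" "W \<noteq> {}"
  shows "\<exists>l\<in>W. \<forall>a\<in>W. \<forall>b\<in>W. adj E l a \<longrightarrow> adj E l b \<longrightarrow> a = b"
proof (rule ccontr)
  assume "\<not> ?thesis"
  then have branching: "\<forall>l\<in>W. \<exists>a\<in>W. \<exists>b\<in>W. a \<noteq> b \<and> adj E l a \<and> adj E l b"
    by blast
  have "\<exists>p. walk W E p \<and> distinct p \<and> length p = Suc k" for k
  proof (induction k)
    case 0
    obtain w where "w \<in> W" using W(3) by blast
    then show ?case by (intro exI[of _ "[w]"]) simp
  next
    case (Suc k)
    then obtain p where p: "walk W E p" "distinct p" "length p = Suc k" by blast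
    then have "hd p \<in> W" using walk_set_subset walk_nonempty hd_in_set by blast
    then obtain a b where "a \<in> W" "b \<in> W" "a \<noteq> b" "adj E (hd p) a" "adj E (hd p) b"
      using branching by blast
    then show ?case using acyclic_walk_extend[OF sg ac W(2) p(1,2)] p(3) by fastforce
  qed
  then obtain p where p: "walk W E p" "distinct p" "length p = Suc (card W)" by blast
  have "length p = card (set p)" using p(2) by (simp add: distinct_card)
  also have "\<dots> \<le> card W" using walk_set_subset[OF p(1)] W(1) by (rule card_mono[rotated])
  finally show False using p(3) by simp
qed

definition independent :: "'a set set \<Rightarrow> 'a set \<Rightarrow> bool" where
  "independent E I \<longleftrightarrow> (\<forall>x\<in>I. \<forall>y\<in>I. \<not> adj E x y)"

lemma independent_empty [simp]: "independent E {}"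
  unfolding independent_def by simp

lemma independent_subset: "independent E I \<Longrightarrow> J \<subseteq> I \<Longrightarrow> independent E J"
  unfolding independent_def by blast

lemma independent_insert:
  "independent E (insert v I) \<longleftrightarrow> \<not> adj E v v \<and> (\<forall>y\<in>I. \<not> adj E v y) \<and> independent E I"
  unfolding independent_def by (auto dest: adj_commute[THEN iffD1])

lemma independent_dominating_imp_minimal:
  assumes "independent E J" "dominating V E J"
  shows "minimal_dominating V E J"
  unfolding minimal_dominating_def
proof (intro conjI allI impI notI)
  fix S assume S: "S \<subset> J" "dominating V E S"
  obtain u where u: "u \<in> J" "u \<notin> S" using S(1) by blast
  have "u \<in> V" using assms(2) u(1) unfolding dominating_def by blast
  then obtain w where "w \<in> S" "adj E w u" using S(2) u(2) unfolding dominating_def by blast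
  moreover have "w \<in> J" using S(1) \<open>w \<in> S\<close> by blast
  ultimately show False using assms(1) u(1) unfolding independent_def by blast
qed (fact assms(2))

lemma independent_extends_to_dominating:
  assumes "simple_graph V E" "finite V" "I \<subseteq> V" "independent E I"
  obtains J where "I \<subseteq> J" "independent E J" "dominating V E J"
proof -
  let ?C = "{J. I \<subseteq> J \<and> J \<subseteq> V \<and> independent E J}"
  have "?C \<subseteq> Pow V" by blast
  then have "finite ?C" using assms(2) by (simp add: finite_subset)
  moreover have "?C \<noteq> {}" using assms(3,4) by blast
  ultimately have "\<exists>J\<in>?C. \<forall>K\<in>?C. J \<le> K \<longrightarrow> J = K" by (rule finite_has_maximal)
  then obtain J where J: "J \<in> ?C" and maximal: "\<forall>K\<in>?C. J \<subseteq> K \<longrightarrow> J = K" by blast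
  have "\<exists>u\<in>J. adj E u v" if v: "v \<in> V" "v \<notin> J" for v
  proof (rule ccontr)
    assume "\<not> (\<exists>u\<in>J. adj E u v)"
    then have "\<forall>y\<in>J. \<not> adj E v y" by (simp add: adj_commute[of E v])
    then have "independent E (insert v J)"
      using J simple_graph_not_adj_self[OF assms(1)] by (simp add: independent_insert)
    then have "insert v J \<in> ?C" using J v(1) by auto
    then have "J = insert v J" using maximal subset_insertI by blast
    then show False using v(2) by blast
  qed
  then have "dominating V E J" using J unfolding dominating_def by blast
  with J show thesis by (intro that) simp_all
qed

lemma finite_minimal_dominating: "finite V \<Longrightarrow> finite {S. minimal_dominating V E S}"
  unfolding minimal_dominating_def dominating_def by (rule finite_subset[of _ "Pow V"]) auto

lemma independent_card_le_upper_domination: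
  assumes "simple_graph V E" "finite V" "I \<subseteq> V" "independent E I"
  shows "card I \<le> upper_domination V E"
proof -
  obtain J where J: "I \<subseteq> J" "independent E J" "dominating V E J"
    using independent_extends_to_dominating[OF assms] .
  have "J \<subseteq> V" using J(3) unfolding dominating_def by blast
  then have "card I \<le> card J" using J(1) assms(2) by (meson card_mono finite_subset)
  also have "\<dots> \<le> upper_domination V E"
    unfolding upper_domination_def using finite_minimal_dominating[OF assms(2)]
      independent_dominating_imp_minimal[OF J(2,3)] by (intro Max_ge) auto
  finally show ?thesis .
qed

lemma matching_between_empty [simp]: "matching_between E A B {}"
  unfolding matching_between_def by simp

lemma matching_betweenD:
  assumes "matching_between E A B F" "e \<in> F"
  shows "e \<in> E" "\<exists>x\<in>A. \<exists>y\<in>B. e = {x, y}"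
  using assms unfolding matching_between_def by auto

lemma matching_between_mono:
  "matching_between E A B F \<Longrightarrow> A \<subseteq> A' \<Longrightarrow> B \<subseteq> B' \<Longrightarrow> matching_between E A' B' F"
  unfolding matching_between_def by (meson subsetD)

lemma matching_between_edge_subset:
  "matching_between E A B F \<Longrightarrow> e \<in> F \<Longrightarrow> e \<subseteq> A \<union> B"
  unfolding matching_between_def by fastforce

lemma matching_between_finite:
  assumes "finite A" "finite B" "matching_between E A B F"
  shows "finite F"
proof -
  have "F \<subseteq> Pow (A \<union> B)" using matching_between_edge_subset[OF assms(3)] by auto
  then show ?thesis using assms(1,2) finite_subset by blast
qed

lemma matching_between_insert:
  assumes "matching_between E A B F" "{x, y} \<in> E" "x \<in> A" "y \<in> B"
    and "\<forall>e\<in>F. x \<notin> e \<and> y \<notin> e"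
  shows "matching_between E A B (insert {x, y} F)"
  using assms unfolding matching_between_def by auto

lemma matching_between_restrict_left:
  assumes F: "matching_between E A B F"
    and restrict: "\<And>x y. y \<in> B \<Longrightarrow> {x, y} \<in> E \<Longrightarrow> x \<in> A'"
  shows "matching_between E A' B F"
proof -
  have "\<exists>x\<in>A'. \<exists>y\<in>B. e = {x, y}" if e: "e \<in> F" for e
  proof -
    obtain x y where "y \<in> B" "e = {x, y}" using matching_betweenD(2)[OF F e] by blast
    then show ?thesis using restrict matching_betweenD(1)[OF F e] by blast
  qed
  then show ?thesis using F unfolding matching_between_def by simp
qed

lemma matching_between_pairs_image:
  assumes "inj_on f B" "f ` B \<inter> B = {}" "\<And>u. u \<in> B \<Longrightarrow> f u \<in> A \<and> {f u, u} \<in> E"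
  shows "matching_between E A B ((\<lambda>u. {f u, u}) ` B)"
  unfolding matching_between_def
proof (intro conjI ballI impI)
  fix e e' assume "e \<in> (\<lambda>u. {f u, u}) ` B" "e' \<in> (\<lambda>u. {f u, u}) ` B" "e \<noteq> e'"
  then obtain u u' where "u \<in> B" "u' \<in> B" "u \<noteq> u'" "e = {f u, u}" "e' = {f u', u'}" by blast
  moreover have "f u \<noteq> f u'" using assms(1) \<open>u \<in> B\<close> \<open>u' \<in> B\<close> \<open>u \<noteq> u'\<close> by (meson inj_onD)
  moreover have "f u \<noteq> u'" "f u' \<noteq> u" using assms(2) \<open>u \<in> B\<close> \<open>u' \<in> B\<close> by blast+
  ultimately show "e \<inter> e' = {}" by auto
qed (use assms(3) in auto)

lemma card_pairs_image:
  assumes "f ` B \<inter> B = {}"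
  shows "card ((\<lambda>u. {f u, u}) ` B) = card B"
proof (rule card_image, rule inj_onI)
  fix u u' assume "u \<in> B" "u' \<in> B" and "{f u, u} = {f u', u'}"
  then have "u \<in> {f u', u'}" by blast
  moreover have "u \<noteq> f u'" using assms \<open>u \<in> B\<close> \<open>u' \<in> B\<close> by blast
  ultimately show "u = u'" by blast
qed

lemma card_le_max_matching:
  assumes "finite E" "matching_between E A B F"
  shows "card F \<le> max_matching E A B"
proof -
  have "{F. matching_between E A B F} \<subseteq> Pow E" unfolding matching_between_def by blast
  then have "finite {F. matching_between E A B F}" using assms(1) finite_subset by blast
  then show ?thesis unfolding max_matching_def using assms(2) by (intro Max_ge) auto
qed

lemma matching_between_pendant_trade:
  assumes W: "finite W" "A \<subseteq> W" and A: "independent E A"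
    and lp: "l \<in> W" "p \<in> W" "adj E l p" "l \<noteq> p"
    and F': "matching_between E (W - {l, p}) (A - {l, p}) F'"
  shows "\<exists>F. matching_between E W A F \<and> card {l, p} + card (A \<inter> {l, p}) + card F' \<le> 2 + card F"
proof -
  have F'W: "matching_between E W A F'" using F' by (rule matching_between_mono) auto
  show ?thesis
  proof (cases "A \<inter> {l, p} = {}")
    case True
    then show ?thesis using F'W lp(4) by (intro exI[of _ F']) simp
  next
    case False
    have "\<not> (l \<in> A \<and> p \<in> A)" using A lp(3) unfolding independent_def by blast
    then have single: "card (A \<inter> {l, p}) = 1" using False by (cases "l \<in> A") auto
    have fresh: "\<forall>e\<in>F'. l \<notin> e \<and> p \<notin> e" "\<forall>e\<in>F'. p \<notin> e \<and> l \<notin> e"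
      using matching_between_edge_subset[OF F'] by blast+
    have edge: "{l, p} \<in> E" "{p, l} \<in> E" using lp(3) unfolding adj_def by (auto simp: insert_commute)
    have "matching_between E W A (insert {l, p} F')"
    proof (cases "p \<in> A")
      case True
      show ?thesis using matching_between_insert[OF F'W edge(1) lp(1) True fresh(1)] .
    next
      case False
      then have "l \<in> A" using \<open>A \<inter> {l, p} \<noteq> {}\<close> by blast
      then show ?thesis
        using matching_between_insert[OF F'W edge(2) lp(2) _ fresh(2)] by (simp add: insert_commute)
    qed
    moreover have "finite F'"
      using matching_between_finite[OF _ _ F'] W finite_subset by (metis finite_Diff)
    moreover have "{l, p} \<notin> F'" using fresh(1) by blast
    ultimately show ?thesis using single lp(4) by (intro exI[of _ "insert {l, p} F'"]) auto
  qed
qed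

lemma leaf_neighbourhood_trade:
  assumes sg: "simple_graph V E" and W: "finite W" "A \<subseteq> W" "independent E A"
    and l: "l \<in> W" and leaf: "\<forall>a\<in>W. \<forall>b\<in>W. adj E l a \<longrightarrow> adj E l b \<longrightarrow> a = b"
  obtains R where "l \<in> R" "R \<subseteq> W" "\<forall>q\<in>W. adj E l q \<longrightarrow> q \<in> R"
    "\<And>F'. matching_between E (W - R) (A - R) F' \<Longrightarrow>
      \<exists>F. matching_between E W A F \<and> card R + card (A \<inter> R) + card F' \<le> 2 + card F"
proof (cases "\<exists>p\<in>W. adj E l p")
  case False
  have "card (A \<inter> {l}) \<le> card {l}" by (rule card_mono) auto
  then show thesis
    using l False by (intro that[of "{l}"]) (auto intro: matching_between_mono)
next
  case True
  then obtain p where p: "p \<in> W" "adj E l p" by blast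
  then have "l \<noteq> p" using simple_graph_not_adj_self[OF sg] by metis
  show thesis
  proof (rule that[of "{l, p}"])
    show "\<forall>q\<in>W. adj E l q \<longrightarrow> q \<in> {l, p}" using leaf p by blast
    fix F' assume "matching_between E (W - {l, p}) (A - {l, p}) F'"
    then show "\<exists>F. matching_between E W A F \<and> card {l, p} + card (A \<inter> {l, p}) + card F' \<le> 2 + card F"
      by (rule matching_between_pendant_trade[OF W l p \<open>l \<noteq> p\<close>])
  qed (use l p in auto)
qed

lemma leaf_insert_bound:
  assumes sg: "simple_graph V E" and W: "finite W" "A \<subseteq> W"
    and R: "l \<in> R" "R \<subseteq> W" "\<forall>q\<in>W. adj E l q \<longrightarrow> q \<in> R"
    and I': "I' \<subseteq> W - R" "independent E I'"
    and bound: "card (W - R) + card (A - R) \<le> 2 * card I' + card F'"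
    and traded: "card R + card (A \<inter> R) + card F' \<le> 2 + card F"
  shows "independent E (insert l I')" "card W + card A \<le> 2 * card (insert l I') + card F"
proof -
  show "independent E (insert l I')"
    using I' R(3) simple_graph_not_adj_self[OF sg] by (auto simp: independent_insert)
  have "finite I'" using I'(1) W(1) by (meson finite_Diff finite_subset)
  moreover have "l \<notin> I'" using I'(1) R(1) by blast
  ultimately have "card (insert l I') = Suc (card I')" by simp
  moreover have "card W = card (W - R) + card R"
  proof -
    have "finite R" using R(2) W(1) by (rule finite_subset)
    then show ?thesis using R(2) card_mono[OF W(1) R(2)] by (simp add: card_Diff_subset)
  qed
  moreover have "card A = card (A \<inter> R) + card (A - R)"
    using finite_subset[OF W(2,1)] by (rule card_Int_Diff)
  ultimately show "card W + card A \<le> 2 * card (insert l I') + card F" using bound traded by simp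
qed

(*
  Induction on W: a leaf l joins I and its closed W-neighbourhood R is deleted. This costs
  |R| + |A \<inter> R| <= 2, except when R = {l, p} meets A, where the edge lp is added to F.
*)
lemma acyclic_independent_matching_bound:
  assumes sg: "simple_graph V E" and ac: "acyclic_graph V E"
  shows "finite W \<Longrightarrow> W \<subseteq> V \<Longrightarrow> A \<subseteq> W \<Longrightarrow> independent E A \<Longrightarrow>
    \<exists>I F. I \<subseteq> W \<and> independent E I \<and> matching_between E W A F
      \<and> card W + card A \<le> 2 * card I + card F"
proof (induction W arbitrary: A rule: finite_psubset_induct)
  case (psubset W)
  show ?case
  proof (cases "W = {}")
    case True
    then show ?thesis using psubset.prems by (intro exI[of _ "{}"]) auto
  next
    case False
    obtain l where l: "l \<in> W" and leaf: "\<forall>a\<in>W. \<forall>b\<in>W. adj E l a \<longrightarrow> adj E l b \<longrightarrow> a = b"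
      using acyclic_subset_has_leaf[OF sg ac psubset.hyps(1) psubset.prems(1) False] by blast
    obtain R where R: "l \<in> R" "R \<subseteq> W" "\<forall>q\<in>W. adj E l q \<longrightarrow> q \<in> R"
      and trade: "\<And>F'. matching_between E (W - R) (A - R) F' \<Longrightarrow>
        \<exists>F. matching_between E W A F \<and> card R + card (A \<inter> R) + card F' \<le> 2 + card F"
      using leaf_neighbourhood_trade[OF sg psubset.hyps(1) psubset.prems(2,3) l leaf] by blast
    have "W - R \<subset> W" using R(1) l by blast
    moreover have "W - R \<subseteq> V" "A - R \<subseteq> W - R" using psubset.prems(1,2) by blast+
    moreover have "independent E (A - R)" using psubset.prems(3) by (rule independent_subset) blast
    ultimately have "\<exists>I' F'. I' \<subseteq> W - R \<and> independent E I' \<and> matching_between E (W - R) (A - R) F'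
        \<and> card (W - R) + card (A - R) \<le> 2 * card I' + card F'"
      by (rule psubset.IH)
    then obtain I' F' where I': "I' \<subseteq> W - R" "independent E I'"
      and F': "matching_between E (W - R) (A - R) F'"
      and bound: "card (W - R) + card (A - R) \<le> 2 * card I' + card F'"
      by blast
    obtain F where F: "matching_between E W A F"
      and traded: "card R + card (A \<inter> R) + card F' \<le> 2 + card F"
      using trade[OF F'] by blast
    note step = leaf_insert_bound[OF sg psubset.hyps(1) psubset.prems(2) R I' bound traded]
    show ?thesis using step I'(1) R(1,2) F by (intro exI[of _ "insert l I'"] exI[of _ F]) auto
  qed
qed

lemma minimal_dominating_aS_eq:
  assumes "minimal_dominating V E M"
  shows "aS V E M = M"
proof -
  have "\<not> dominating V E (M - {u})" if "u \<in> M" for u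
    using assms that unfolding minimal_dominating_def by blast
  then show ?thesis unfolding aS_def by blast
qed

lemma dominating_outside_eq_N1_Un_N2:
  assumes "finite V" "dominating V E S"
  shows "V - S = N1 V E S \<union> N2 V E S"
proof
  show "V - S \<subseteq> N1 V E S \<union> N2 V E S"
  proof
    fix v assume v: "v \<in> V - S"
    then obtain u where "u \<in> S" "adj E u v" using assms(2) unfolding dominating_def by blast
    moreover have "u \<in> V" using \<open>u \<in> S\<close> assms(2) unfolding dominating_def by blast
    ultimately have "u \<in> cnbhd V E v \<inter> S" unfolding cnbhd_def by (simp add: adj_commute)
    moreover have "finite (cnbhd V E v \<inter> S)" using assms(1) unfolding cnbhd_def by simp
    ultimately have "card (cnbhd V E v \<inter> S) \<noteq> 0" by auto
    then show "v \<in> N1 V E S \<union> N2 V E S" using v unfolding N1_def N2_def by auto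
  qed
qed (auto simp: N1_def N2_def)

lemma card_dominating_split:
  assumes "finite V" "dominating V E S"
  shows "card V = card S + card (N1 V E S) + card (N2 V E S)"
proof -
  have "S \<subseteq> V" using assms(2) unfolding dominating_def by blast
  then have "card V = card S + card (V - S)"
    using assms(1) by (metis card_Diff_subset card_mono finite_subset le_add_diff_inverse)
  also have "card (V - S) = card (N1 V E S) + card (N2 V E S)"
    unfolding dominating_outside_eq_N1_Un_N2[OF assms]
    using assms(1) by (intro card_Un_disjoint) (auto simp: N1_def N2_def)
  finally show ?thesis by simp
qed

lemma card_aS_split:
  assumes "finite S"
  shows "card (aS V E S) = card (a1 V E S) + card (a2 V E S)"
proof -
  have "aS V E S = a1 V E S \<union> a2 V E S" "a1 V E S \<inter> a2 V E S = {}"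
    unfolding a1_def a2_def by auto
  moreover have "finite (aS V E S)" using assms unfolding aS_def by simp
  ultimately show ?thesis by (simp add: card_Un_disjoint)
qed

lemma aS_isolated_or_private_neighbour:
  assumes sg: "simple_graph V E" and dom: "dominating V E S" and u: "u \<in> aS V E S"
  shows "(\<forall>x\<in>S. \<not> adj E x u) \<or> cnbhd V E u \<inter> N1 V E S \<noteq> {}"
proof -
  have uS: "u \<in> S" and "\<not> dominating V E (S - {u})" using u unfolding aS_def by auto
  moreover have "S - {u} \<subseteq> V" using dom unfolding dominating_def by blast
  ultimately obtain v where v: "v \<in> V" "v \<notin> S - {u}"
    and undominated: "\<forall>w\<in>S - {u}. \<not> adj E w v"
    unfolding dominating_def by blast
  show ?thesis
  proof (cases "v = u")
    case True
    have "\<not> adj E x u" if "x \<in> S" for x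
      using undominated that True simple_graph_not_adj_self[OF sg] by (cases "x = u") auto
    then show ?thesis by blast
  next
    case False
    then have vS: "v \<notin> S" using v(2) by blast
    then obtain w where "w \<in> S" "adj E w v" using dom v(1) unfolding dominating_def by blast
    then have uv: "adj E u v" using undominated by blast
    have "cnbhd V E v \<inter> S = {u}"
    proof
      show "{u} \<subseteq> cnbhd V E v \<inter> S"
        using uS uv simple_graph_adj_in_vertices[OF sg uv] unfolding cnbhd_def by (simp add: adj_commute)
      show "cnbhd V E v \<inter> S \<subseteq> {u}"
        using undominated vS unfolding cnbhd_def by (auto simp: adj_commute)
    qed
    then have "v \<in> N1 V E S" using v(1) vS unfolding N1_def by simp
    moreover have "v \<in> cnbhd V E u" using v(1) uv unfolding cnbhd_def by simp
    ultimately show ?thesis by blast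
  qed
qed

lemma a2_not_adj:
  assumes "simple_graph V E" "dominating V E S" "u \<in> a2 V E S" "x \<in> S"
  shows "\<not> adj E x u"
  using aS_isolated_or_private_neighbour[OF assms(1,2)] assms(3,4) unfolding a2_def by blast

lemma a2_independent:
  assumes "simple_graph V E" "dominating V E S"
  shows "independent E (a2 V E S)"
proof -
  have "a2 V E S \<subseteq> S" unfolding a2_def aS_def by blast
  then show ?thesis unfolding independent_def using a2_not_adj[OF assms] adj_commute by blast
qed

lemma a2_neighbour_in_N2:
  assumes "finite V" "simple_graph V E" "dominating V E S" "u \<in> a2 V E S" "adj E x u"
  shows "x \<in> N2 V E S"
proof -
  have "x \<in> V" using simple_graph_adj_in_vertices[OF assms(2,5)] by blast
  moreover have "x \<notin> S" using a2_not_adj[OF assms(2-4)] assms(5) by blast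
  moreover have "x \<in> cnbhd V E u" using \<open>x \<in> V\<close> assms(5) unfolding cnbhd_def by (simp add: adj_commute)
  then have "x \<notin> N1 V E S" using assms(4) unfolding a2_def by blast
  ultimately show ?thesis using dominating_outside_eq_N1_Un_N2[OF assms(1,3)] by blast
qed

lemma card_a1_le_rho1:
  assumes "finite V" "simple_graph V E"
  shows "card (a1 V E S) \<le> rho1 V E S"
proof -
  let ?A = "N1 V E S" and ?B = "a1 V E S"
  have B_S: "?B \<subseteq> S" and A_S: "?A \<inter> S = {}" unfolding a1_def aS_def N1_def by auto
  have "\<exists>p. p \<in> ?A \<and> adj E u p" if u: "u \<in> ?B" for u
  proof -
    obtain p where "p \<in> cnbhd V E u" "p \<in> ?A" using u unfolding a1_def by blast
    moreover have "p \<noteq> u" using \<open>p \<in> ?A\<close> u B_S A_S by blast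
    ultimately show ?thesis unfolding cnbhd_def by blast
  qed
  then obtain f where f: "\<And>u. u \<in> ?B \<Longrightarrow> f u \<in> ?A \<and> adj E u (f u)" by metis
  have outside: "f ` ?B \<inter> ?B = {}" using f B_S A_S by blast
  have inj: "inj_on f ?B"
  proof (rule inj_onI)
    fix u u' assume u: "u \<in> ?B" "u' \<in> ?B" "f u = f u'"
    let ?p = "f u"
    have "card (cnbhd V E ?p \<inter> S) = 1" using f[OF u(1)] unfolding N1_def by blast
    then obtain w where w: "cnbhd V E ?p \<inter> S = {w}" by (auto simp: card_1_singleton_iff)
    have "adj E ?p u" "adj E ?p u'" using f[OF u(1)] f[OF u(2)] u(3) adj_commute by metis+
    then have "u \<in> cnbhd V E ?p \<inter> S" "u' \<in> cnbhd V E ?p \<inter> S"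
      using u(1,2) B_S simple_graph_adj_in_vertices[OF assms(2)] unfolding cnbhd_def by auto
    then show "u = u'" using w by auto
  qed
  have edges: "u \<in> ?B \<Longrightarrow> f u \<in> ?A \<and> {f u, u} \<in> E" for u
    using f unfolding adj_def by (simp add: insert_commute)
  have "matching_between E ?A ?B ((\<lambda>u. {f u, u}) ` ?B)"
    using inj outside edges by (rule matching_between_pairs_image)
  then have "card ((\<lambda>u. {f u, u}) ` ?B) \<le> rho1 V E S"
    unfolding rho1_def using simple_graph_finite_edges[OF assms(2,1)] by (simp add: card_le_max_matching)
  then show ?thesis using card_pairs_image[OF outside] by simp
qed

lemma forest_card_a2_bound:
  assumes "finite V" "simple_graph V E" "acyclic_graph V E" "dominating V E S"
  obtains I where "I \<subseteq> V" "independent E I" "card V + card (a2 V E S) \<le> 2 * card I + rho2 V E S"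
proof -
  have "a2 V E S \<subseteq> V" using assms(4) unfolding a2_def aS_def dominating_def by blast
  from acyclic_independent_matching_bound[OF assms(2,3,1) order_refl this a2_independent[OF assms(2,4)]]
  obtain I F where I: "I \<subseteq> V" "independent E I" and F: "matching_between E V (a2 V E S) F"
    and bound: "card V + card (a2 V E S) \<le> 2 * card I + card F"
    by blast
  have "x \<in> N2 V E S" if "u \<in> a2 V E S" "{x, u} \<in> E" for x u
    using a2_neighbour_in_N2[OF assms(1,2,4) that(1)] that(2) unfolding adj_def .
  with F have "matching_between E (N2 V E S) (a2 V E S) F" by (rule matching_between_restrict_left)
  then have "card F \<le> rho2 V E S"
    unfolding rho2_def using simple_graph_finite_edges[OF assms(2,1)] by (simp add: card_le_max_matching)
  then show thesis using that I bound by simp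
qed

theorem theorem4p8:
  fixes V :: "'a set" and E :: "'a set set" and M :: "'a set"
  assumes "finite_tree V E"
    and "minimal_dominating V E M"
  shows "int (card (N1 V E M)) - int (rho1 V E M) + int (card (N2 V E M)) - int (rho2 V E M)
           \<le> 2 * (int (upper_domination V E) - int (card M))"
proof -
  have fin: "finite V" and sg: "simple_graph V E" and ac: "acyclic_graph V E"
    using assms(1) unfolding finite_tree_def by auto
  have dom: "dominating V E M" using assms(2) unfolding minimal_dominating_def by blast
  then have "finite M" using fin unfolding dominating_def by (meson finite_subset)
  then have split_M: "card M = card (a1 V E M) + card (a2 V E M)"
    using card_aS_split minimal_dominating_aS_eq[OF assms(2)] by metis
  obtain I where I: "I \<subseteq> V" "independent E I"
    and bound: "card V + card (a2 V E M) \<le> 2 * card I + rho2 V E M"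
    using forest_card_a2_bound[OF fin sg ac dom] .
  have "card I \<le> upper_domination V E" using independent_card_le_upper_domination[OF sg fin I] .
  moreover have "card (a1 V E M) \<le> rho1 V E M" using card_a1_le_rho1[OF fin sg] .
  moreover have "card V = card M + card (N1 V E M) + card (N2 V E M)"
    using card_dominating_split[OF fin dom] .
  ultimately have "card (N1 V E M) + card (N2 V E M) + 2 * card M
      \<le> 2 * upper_domination V E + rho1 V E M + rho2 V E M"
    using split_M bound by linarith
  then have "int (card (N1 V E M) + card (N2 V E M) + 2 * card M)
      \<le> int (2 * upper_domination V E + rho1 V E M + rho2 V E M)"
    by (simp only: of_nat_le_iff)
  then show ?thesis by simp
qed

end
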